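(* Let $\alpha$ be an equidistributed infinite permutation with $p_{\alpha}(n)=n$ for all $n\ge1$. Then the underlying word $s$ of $\alpha$ is aperiodic (not ultimately periodic).
   Context: An infinite permutation is an equivalence class of sequences of pairwise distinct reals under $a\sim b\iff(a[i]<a[j]\Leftrightarrow b[i]<b[j]\ \forall i,j)$; write $\alpha=(\alpha[n])_{n\ge0}$ with the induced order. $p_\alpha(n)$ is the number of distinct factors $\alpha[i..i+n-1]$ of length $n$, each regarded as a finite permutation (relative order). A sequence $(a[n])$ in $[0,1]$ is equidistributed if $\lim_{n\to\infty}\frac{\#\{0\le i<n:a[i]<t\}}{n}=t$ for each $t\in[0,1]$; a permutation is equidistributed if it has an equidistributed representative in $[0,1]$. The underlying word of $\alpha$ is the infinite binary word $s$ with $s[i]=0$ if $\alpha[i]<\alpha[i+1]$ and $s[i]=1$ otherwise. An infinite word is ultimately periodic if it equals $vwww\cdots$ for finite words $v,w$ with $w$ nonempty. *)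

theory Defs
  imports Complex_Main
begin

text \<open>An infinite permutation is represented by any representative sequence
  of pairwise distinct reals; all notions below depend only on the order type.\<close>

definition order_equiv :: "(nat \<Rightarrow> real) \<Rightarrow> (nat \<Rightarrow> real) \<Rightarrow> bool" where
  "order_equiv a b \<longleftrightarrow> (\<forall>i j. a i < a j \<longleftrightarrow> b i < b j)"

definition equidistributed_seq :: "(nat \<Rightarrow> real) \<Rightarrow> bool" where
  "equidistributed_seq b \<longleftrightarrow> (\<forall>n. b n \<in> {0..1}) \<and>
     (\<forall>t\<in>{0..1}. (\<lambda>n. real (card {i. i < n \<and> b i < t}) / real n) \<longlonglongrightarrow> t)"

definition equidistributed_perm :: "(nat \<Rightarrow> real) \<Rightarrow> bool" where
  "equidistributed_perm a \<longleftrightarrow> (\<exists>b. inj b \<and> order_equiv a b \<and> equidistributed_seq b)"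

text \<open>The factor of length n starting at i, as a finite permutation (relative order pattern
  on positions 0..n-1).\<close>
definition perm_factor :: "(nat \<Rightarrow> real) \<Rightarrow> nat \<Rightarrow> nat \<Rightarrow> (nat \<Rightarrow> nat \<Rightarrow> bool)" where
  "perm_factor a i n = (\<lambda>j k. j < n \<and> k < n \<and> a (i + j) < a (i + k))"

definition perm_complexity :: "(nat \<Rightarrow> real) \<Rightarrow> nat \<Rightarrow> nat" where
  "perm_complexity a n = card {perm_factor a i n | i. True}"

definition underlying_word :: "(nat \<Rightarrow> real) \<Rightarrow> nat \<Rightarrow> nat" where
  "underlying_word a i = (if a i < a (Suc i) then 0 else 1)"

definition ultimately_periodic :: "(nat \<Rightarrow> 'a) \<Rightarrow> bool" where
  "ultimately_periodic s \<longleftrightarrow> (\<exists>N p. p > 0 \<and> (\<forall>i\<ge>N. s (i + p) = s i))"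

end

theory Submission
  imports Defs "HOL-Real_Asymp.Real_Asymp"
begin

text \<open>Take a representative \<open>b\<close> of \<open>\<alpha>\<close> equidistributed in \<open>[0,1]\<close> and suppose the
  underlying word is ultimately periodic with minimal period \<open>t\<close>, from position \<open>N\<close> on.
  Along an arithmetic progression \<open>b\<close> cannot be monotone: a monotone subsequence converges,
  so a progression of density \<open>1/t\<close> would crowd into an arbitrarily short interval.
  Hence in every residue class \<open>N + r\<close> modulo \<open>t\<close> there are positions \<open>p\<close> with
  \<open>b p < b (p + t)\<close> and positions with \<open>b p > b (p + t)\<close>. The factors of length \<open>t + 1\<close>
  at these \<open>2t\<close> positions are pairwise distinct: the comparison of first and last entry
  separates the two kinds, and minimality of \<open>t\<close> separates different residues through the
  underlying word. So \<open>2t \<le> p\<^sub>\<alpha>(t + 1) = t + 1\<close>, i.e. \<open>t = 1\<close>; but then the word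
  would be eventually constant and \<open>b\<close> eventually monotone.\<close>

lemma equidistributed_seq_window_frequency:
  assumes "equidistributed_seq b" and "0 \<le> t0" "t0 \<le> t1" "t1 \<le> 1"
  shows "(\<lambda>n. real (card {i. i < n \<and> t0 \<le> b i \<and> b i < t1}) / real n) \<longlonglongrightarrow> t1 - t0"
proof -
  have below: "(\<lambda>n. real (card {i. i < n \<and> b i < t}) / real n) \<longlonglongrightarrow> t" if "t \<in> {0..1}" for t
    using assms(1) that unfolding equidistributed_seq_def by blast
  have "card {i. i < n \<and> b i < t1}
      = card {i. i < n \<and> b i < t0} + card {i. i < n \<and> t0 \<le> b i \<and> b i < t1}" for n
  proof -
    have "{i. i < n \<and> b i < t1} = {i. i < n \<and> b i < t0} \<union> {i. i < n \<and> t0 \<le> b i \<and> b i < t1}"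
      using assms(3) by auto
    then show ?thesis by (simp add: card_Un_disjoint disjoint_iff)
  qed
  then have "real (card {i. i < n \<and> t0 \<le> b i \<and> b i < t1}) / real n
      = real (card {i. i < n \<and> b i < t1}) / real n - real (card {i. i < n \<and> b i < t0}) / real n"
    for n by (simp add: add_divide_distrib)
  moreover have "(\<lambda>n. real (card {i. i < n \<and> b i < t1}) / real n
      - real (card {i. i < n \<and> b i < t0}) / real n) \<longlonglongrightarrow> t1 - t0"
    using assms by (intro tendsto_diff below) auto
  ultimately show ?thesis by simp
qed

lemma strictly_monotone_unit_seq_eventually_in_window:
  fixes x :: "nat \<Rightarrow> real"
  assumes unit: "\<And>l. x l \<in> {0..1}"
    and mono: "(\<forall>l. x l < x (Suc l)) \<or> (\<forall>l. x (Suc l) < x l)" and "\<epsilon> > 0"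
  obtains t0 t1 where "0 \<le> t0" "t0 \<le> t1" "t1 \<le> 1" "t1 - t0 \<le> 2 * \<epsilon>"
    "\<forall>\<^sub>F l in sequentially. t0 \<le> x l \<and> x l < t1"
proof -
  have "Bseq x" using unit by (intro BseqI'[of _ 1]) auto
  moreover have "monoseq x" using mono unfolding monoseq_Suc by (auto intro: less_imp_le)
  ultimately obtain L where L: "x \<longlonglongrightarrow> L"
    using Bseq_monoseq_convergent convergent_def by blast
  have "L \<in> {0..1}"
    using unit LIMSEQ_le_const[OF L] LIMSEQ_le_const2[OF L] by (meson atLeastAtMost_iff)
  \<comment> \<open>strictness keeps the value \<open>1\<close> out of the window, which is half-open\<close>
  have below_one: "x l < 1" if l: "l \<ge> 1" for l
  proof -
    obtain k where "l = Suc k" using l by (cases l) auto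
    then show ?thesis using mono unit[of k] unit[of "Suc l"] by (auto intro: order_less_le_trans)
  qed
  have "\<forall>\<^sub>F l in sequentially. dist (x l) L < \<epsilon> \<and> l \<ge> 1"
    using L \<open>\<epsilon> > 0\<close> by (intro eventually_conj) (auto simp: tendsto_iff eventually_ge_at_top)
  then have "\<forall>\<^sub>F l in sequentially. max 0 (L - \<epsilon>) \<le> x l \<and> x l < min 1 (L + \<epsilon>)"
    by eventually_elim (use unit below_one in \<open>auto simp: dist_real_def abs_less_iff\<close>)
  with that[of "max 0 (L - \<epsilon>)" "min 1 (L + \<epsilon>)"] \<open>L \<in> {0..1}\<close> \<open>\<epsilon> > 0\<close> show thesis by auto
qed

lemma equidistributed_seq_not_monotone_on_progression:
  assumes eq: "equidistributed_seq b" and "D > 0"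
  shows "\<not> ((\<forall>l. b (c + l * D) < b (c + Suc l * D)) \<or> (\<forall>l. b (c + Suc l * D) < b (c + l * D)))"
proof
  assume mono: "(\<forall>l. b (c + l * D) < b (c + Suc l * D)) \<or> (\<forall>l. b (c + Suc l * D) < b (c + l * D))"
  have unit: "\<And>l. b (c + l * D) \<in> {0..1}" using eq unfolding equidistributed_seq_def by blast
  have "1 / (4 * real D) > 0" using \<open>D > 0\<close> by simp
  then obtain t0 t1 where t: "0 \<le> t0" "t0 \<le> t1" "t1 \<le> 1" "t1 - t0 \<le> 2 * (1 / (4 * real D))"
    and "\<forall>\<^sub>F l in sequentially. t0 \<le> b (c + l * D) \<and> b (c + l * D) < t1"
    by (rule strictly_monotone_unit_seq_eventually_in_window[of "\<lambda>l. b (c + l * D)", OF unit mono])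
  then obtain l1 where window: "\<And>l. l \<ge> l1 \<Longrightarrow> t0 \<le> b (c + l * D) \<and> b (c + l * D) < t1"
    unfolding eventually_sequentially by blast
  define n where "n m = c + (l1 + m) * D" for m
  define W where "W k = {i. i < k \<and> t0 \<le> b i \<and> b i < t1}" for k
  have "filterlim n at_top at_top"
    unfolding n_def using \<open>D > 0\<close> by real_asymp
  then have freq: "(\<lambda>m. real (card (W (n m))) / real (n m)) \<longlonglongrightarrow> t1 - t0"
    unfolding W_def by (rule filterlim_compose[OF equidistributed_seq_window_frequency[OF eq t(1-3)]])
  have density: "(\<lambda>m. real m / real (n m)) \<longlonglongrightarrow> inverse (real D)"
    unfolding n_def using \<open>D > 0\<close> by real_asymp
  have "real m / real (n m) \<le> real (card (W (n m))) / real (n m)" for m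
  proof -
    have "(\<lambda>l. c + l * D) ` {l1..<l1 + m} \<subseteq> W (n m)"
      using window \<open>D > 0\<close> by (auto simp: W_def n_def)
    moreover have "finite (W (n m))" by (simp add: W_def)
    moreover have "card ((\<lambda>l. c + l * D) ` {l1..<l1 + m}) = m"
      using \<open>D > 0\<close> by (subst card_image) (auto simp: inj_on_def)
    ultimately have "m \<le> card (W (n m))" using card_mono by metis
    then show ?thesis by (simp add: divide_right_mono)
  qed
  then have "inverse (real D) \<le> t1 - t0" using LIMSEQ_le[OF density freq] by blast
  with t(4) \<open>D > 0\<close> show False by (simp add: field_simps)
qed

lemma equidistributed_seq_progression_comparison:
  assumes "inj b" and "equidistributed_seq b" and "D > 0"
  shows "\<exists>l. b (c + l * D) < b (c + Suc l * D) \<longleftrightarrow> e"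
proof (rule ccontr)
  assume "\<nexists>l. b (c + l * D) < b (c + Suc l * D) \<longleftrightarrow> e"
  moreover have "b (c + l * D) \<noteq> b (c + Suc l * D)" for l
    using assms(1,3) by (auto dest: injD)
  ultimately have "(\<forall>l. b (c + l * D) < b (c + Suc l * D)) \<or> (\<forall>l. b (c + Suc l * D) < b (c + l * D))"
    by (cases e) (auto simp: neq_iff)
  with equidistributed_seq_not_monotone_on_progression[OF assms(2,3)] show False by blast
qed

definition eventual_period :: "(nat \<Rightarrow> 'a) \<Rightarrow> nat \<Rightarrow> bool" where
  "eventual_period s d \<longleftrightarrow> (\<exists>N. \<forall>i\<ge>N. s (i + d) = s i)"

lemma ultimately_periodic_obtain_minimal_period:
  fixes s :: "nat \<Rightarrow> 'a"
  assumes "ultimately_periodic s"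
  obtains t N where "t > 0" "\<forall>i\<ge>N. s (i + t) = s i"
    "\<And>d. 0 < d \<Longrightarrow> d < t \<Longrightarrow> \<not> eventual_period s d"
proof -
  define t where "t = (LEAST d. 0 < d \<and> eventual_period s d)"
  have "\<exists>d. 0 < d \<and> eventual_period s d"
    using assms unfolding ultimately_periodic_def eventual_period_def by blast
  then have "0 < t \<and> eventual_period s t" unfolding t_def by (rule LeastI_ex)
  moreover have "\<not> eventual_period s d" if "0 < d" "d < t" for d
    using not_less_Least[of d "\<lambda>d. 0 < d \<and> eventual_period s d"] that by (auto simp: t_def)
  ultimately show thesis using that unfolding eventual_period_def by blast
qed

lemma periodic_word_add_mult:
  fixes s :: "nat \<Rightarrow> 'a"
  assumes "\<forall>i\<ge>N. s (i + t) = s i" and "i \<ge> N"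
  shows "s (i + k * t) = s i"
proof (induction k)
  case (Suc k)
  have "s (i + Suc k * t) = s ((i + k * t) + t)" by (simp add: algebra_simps)
  also have "\<dots> = s (i + k * t)" using assms by simp
  finally show ?case using Suc by simp
qed simp

lemma periodic_word_add_mod:
  fixes s :: "nat \<Rightarrow> 'a"
  assumes "\<forall>i\<ge>N. s (i + t) = s i" and "i \<ge> N"
  shows "s (i + x) = s (i + x mod t)"
proof -
  have "s (i + x) = s ((i + x mod t) + x div t * t)" by (metis add.assoc mod_div_mult_eq)
  also have "\<dots> = s (i + x mod t)" using assms(2) by (intro periodic_word_add_mult[OF assms(1)]) simp
  finally show ?thesis .
qed

lemma minimal_period_shifts_distinct:
  fixes s :: "nat \<Rightarrow> 'a"
  assumes period: "\<forall>i\<ge>N. s (i + t) = s i"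
    and minimal: "\<And>d. 0 < d \<Longrightarrow> d < t \<Longrightarrow> \<not> eventual_period s d"
    and "r < t" "r' < t" and same: "\<forall>x<t. s (N + r + x) = s (N + r' + x)"
  shows "r = r'"
proof -
  have shift_period: "eventual_period s (r' - r)" if "r < r'" "r' < t" and same: "\<forall>x<t. s (N + r + x) = s (N + r' + x)"
    for r r'
  proof -
    have "s (i + (r' - r)) = s i" if "i \<ge> N + r" for i
    proof -
      define y where "y = i - (N + r)"
      have "i + (r' - r) = N + r' + y" using \<open>r < r'\<close> that by (simp add: y_def)
      then have "s (i + (r' - r)) = s (N + r' + y mod t)"
        using periodic_word_add_mod[OF period, of "N + r'" y] by simp
      also have "\<dots> = s (N + r + y mod t)"
        using same \<open>r' < t\<close> by simp
      also have "\<dots> = s i"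
        using periodic_word_add_mod[OF period, of "N + r" y] that by (simp add: y_def)
      finally show ?thesis .
    qed
    then show ?thesis unfolding eventual_period_def by blast
  qed
  consider "r < r'" | "r = r'" | "r' < r" by linarith
  then show ?thesis
  proof cases
    case 1
    then show ?thesis using shift_period[OF 1 \<open>r' < t\<close> same] minimal[of "r' - r"] \<open>r' < t\<close> by auto
  next
    case 3
    then show ?thesis using shift_period[OF 3 \<open>r < t\<close>] same minimal[of "r - r'"] \<open>r < t\<close> by auto
  qed
qed

lemma order_equiv_perm_factor: "order_equiv a b \<Longrightarrow> perm_factor a = perm_factor b"
  unfolding order_equiv_def perm_factor_def by blast

lemma order_equiv_underlying_word: "order_equiv a b \<Longrightarrow> underlying_word a = underlying_word b"
  unfolding order_equiv_def underlying_word_def by (intro ext) simp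

lemma finite_perm_factors: "finite {perm_factor a i n | i. True}"
proof (rule finite_subset)
  show "{perm_factor a i n | i. True} \<subseteq> (\<lambda>S j k. (j, k) \<in> S) ` Pow ({..<n} \<times> {..<n})"
  proof clarify
    fix i
    have "perm_factor a i n = (\<lambda>j k. (j, k) \<in> {(j, k). perm_factor a i n j k})" by simp
    moreover have "{(j, k). perm_factor a i n j k} \<subseteq> {..<n} \<times> {..<n}"
      by (auto simp: perm_factor_def)
    ultimately show "perm_factor a i n \<in> (\<lambda>S j k. (j, k) \<in> S) ` Pow ({..<n} \<times> {..<n})" by blast
  qed
qed simp

lemma perm_factor_eq_imp_underlying_word_eq:
  assumes "perm_factor a p n = perm_factor a q n" and "Suc x < n"
  shows "underlying_word a (p + x) = underlying_word a (q + x)"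
  using fun_cong[OF fun_cong[OF assms(1), of x], of "Suc x"] assms(2)
  by (simp add: perm_factor_def underlying_word_def)

context
  fixes b :: "nat \<Rightarrow> real"
  assumes inj: "inj b" and equidistributed: "equidistributed_seq b"
begin

lemma periodic_underlying_word_obtain_comparison:
  assumes "t > 0" and period: "\<forall>i\<ge>N. underlying_word b (i + t) = underlying_word b i" and "q \<ge> N"
  obtains p where "\<forall>x. underlying_word b (p + x) = underlying_word b (q + x)"
    and "b p < b (p + t) \<longleftrightarrow> e"
proof -
  obtain l where l: "b (q + l * t) < b (q + Suc l * t) \<longleftrightarrow> e"
    using equidistributed_seq_progression_comparison[OF inj equidistributed \<open>t > 0\<close>] by blast
  have "underlying_word b (q + l * t + x) = underlying_word b (q + x)" for x
    using periodic_word_add_mult[OF period, of "q + x" l] \<open>q \<ge> N\<close> by (simp add: add_ac)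
  moreover have "q + Suc l * t = q + l * t + t" by simp
  ultimately show thesis using that l by metis
qed

lemma underlying_word_not_eventually_constant:
  "\<not> (\<forall>i\<ge>N. underlying_word b (i + 1) = underlying_word b i)"
proof
  assume period: "\<forall>i\<ge>N. underlying_word b (i + 1) = underlying_word b i"
  obtain p where p: "\<forall>x. underlying_word b (p + x) = underlying_word b (N + x)" "b p < b (p + 1)"
    using periodic_underlying_word_obtain_comparison[OF zero_less_one period order_refl, where e = True]
    by blast
  obtain p' where p': "\<forall>x. underlying_word b (p' + x) = underlying_word b (N + x)" "\<not> b p' < b (p' + 1)"
    using periodic_underlying_word_obtain_comparison[OF zero_less_one period order_refl, where e = False]
    by blast
  have "underlying_word b p = underlying_word b p'"
    using p(1)[rule_format, of 0] p'(1)[rule_format, of 0] by simp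
  with p(2) p'(2) show False by (simp add: underlying_word_def)
qed

lemma perm_complexity_ge_twice_minimal_period:
  assumes "t > 0" and period: "\<forall>i\<ge>N. underlying_word b (i + t) = underlying_word b i"
    and minimal: "\<And>d. 0 < d \<Longrightarrow> d < t \<Longrightarrow> \<not> eventual_period (underlying_word b) d"
  shows "2 * t \<le> perm_complexity b (t + 1)"
proof -
  let ?s = "underlying_word b"
  have "\<exists>p. (\<forall>x. ?s (p + x) = ?s (N + fst re + x)) \<and> (b p < b (p + t) \<longleftrightarrow> snd re)"
    for re :: "nat \<times> bool"
    by (rule periodic_underlying_word_obtain_comparison[OF \<open>t > 0\<close> period,
          where q = "N + fst re" and e = "snd re"]) auto
  then obtain pos where pos: "\<And>re. (\<forall>x. ?s (pos re + x) = ?s (N + fst re + x))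
      \<and> (b (pos re) < b (pos re + t) \<longleftrightarrow> snd re)"
    by metis
  then have pos_word: "\<And>r e x. ?s (pos (r, e) + x) = ?s (N + r + x)"
    and pos_comparison: "\<And>r e. b (pos (r, e)) < b (pos (r, e) + t) \<longleftrightarrow> e"
    by auto
  define g where "g re = perm_factor b (pos re) (t + 1)" for re
  have "inj_on g ({..<t} \<times> UNIV)"
  proof (rule inj_onI, clarify)
    fix r e r' e'
    assume "r < t" "r' < t" and g: "g (r, e) = g (r', e')"
    have "?s (N + r + x) = ?s (N + r' + x)" if "x < t" for x
      using perm_factor_eq_imp_underlying_word_eq[OF g[unfolded g_def], of x] pos_word that by simp
    then have "r = r'"
      using minimal_period_shifts_distinct[OF period minimal \<open>r < t\<close> \<open>r' < t\<close>] by blast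
    moreover have "perm_factor b (pos (r, e)) (t + 1) 0 t = perm_factor b (pos (r', e')) (t + 1) 0 t"
      using g by (simp add: g_def)
    then have "e = e'" using pos_comparison[of r e] pos_comparison[of r' e'] by (simp add: perm_factor_def)
    ultimately show "r = r' \<and> e = e'" ..
  qed
  then have "card (g ` ({..<t} \<times> UNIV)) = 2 * t" by (simp add: card_image card_cartesian_product)
  moreover have "g ` ({..<t} \<times> UNIV) \<subseteq> {perm_factor b i (t + 1) | i. True}" by (auto simp: g_def)
  ultimately show ?thesis
    unfolding perm_complexity_def by (metis card_mono finite_perm_factors)
qed

end

theorem proposition6:
  fixes a :: "nat \<Rightarrow> real"
  assumes "inj a"
    and "equidistributed_perm a"
    and "\<And>n. n \<ge> 1 \<Longrightarrow> perm_complexity a n = n"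
  shows "\<not> ultimately_periodic (underlying_word a)"
proof
  assume "ultimately_periodic (underlying_word a)"
  obtain b where inj: "inj b" and equiv: "order_equiv a b" and equidistributed: "equidistributed_seq b"
    using assms(2) unfolding equidistributed_perm_def by blast
  have "ultimately_periodic (underlying_word b)"
    using \<open>ultimately_periodic (underlying_word a)\<close> order_equiv_underlying_word[OF equiv] by simp
  then obtain t N where "t > 0" and period: "\<forall>i\<ge>N. underlying_word b (i + t) = underlying_word b i"
    and minimal: "\<And>d. 0 < d \<Longrightarrow> d < t \<Longrightarrow> \<not> eventual_period (underlying_word b) d"
    by (rule ultimately_periodic_obtain_minimal_period) blast
  have "perm_complexity b (t + 1) = t + 1"
    using assms(3)[of "t + 1"] order_equiv_perm_factor[OF equiv] by (simp add: perm_complexity_def)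
  then have "t = 1"
    using perm_complexity_ge_twice_minimal_period[OF inj equidistributed \<open>t > 0\<close> period minimal] \<open>t > 0\<close>
    by linarith
  with period underlying_word_not_eventually_constant[OF inj equidistributed] show False by blast
qed

end
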